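(* Let $p$ be an odd prime and let $e$ be a positive integer. Then the largest complexity of a skew morphism of $\mathbb{Z}_{p^e}$ is $2e-1$.
   Context: $\mathbb{Z}_n$ is the cyclic group of integers modulo $n$. A skew morphism of a finite group $G$ is a permutation $\varphi$ of $G$ fixing the identity such that for each $a\in G$ there is a non-negative integer $i_a$ with $\varphi(ab)=\varphi(a)\varphi^{i_a}(b)$ for all $b\in G$. ${\rm ord}(\varphi)$ is the order of $\langle\varphi\rangle$. If $\varphi$ is non-trivial, $\pi_\varphi(a)$ is the unique such $i_a\in\{1,\dots,{\rm ord}(\varphi)-1\}$; if $\varphi$ is the identity, $\pi_\varphi(a)=1$. Let $\sigma_\varphi(x,y)=\sum_{i=0}^{x-1}\pi_\varphi(\varphi^i(y))\in\mathbb{Z}_{{\rm ord}(\varphi)}$. The derived skew morphism $\varphi'$ of a skew morphism $\varphi$ of $\mathbb{Z}_n$ is the skew morphism of $\mathbb{Z}_{{\rm ord}(\varphi)}$ given by $\varphi'(a)=\sigma_\varphi(a,1)$. Set $\varphi^{(0)}=\varphi$, $\varphi^{(i+1)}=(\varphi^{(i)})'$. For $n\ge 2$ the complexity of $\varphi$ is the unique non-negative integer $c$ such that $\varphi^{(c)}$ is a skew morphism of a non-trivial cyclic group and $\varphi^{(c+1)}$ is a skew morphism of $\mathbb{Z}_1$. *)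

theory Defs
  imports "HOL-Combinatorics.Permutations" "HOL-Computational_Algebra.Primes"
begin

text \<open>The cyclic group Z_n is represented by the carrier {0..<n} with addition mod n.
  A function on Z_n is represented as a function nat => nat that is the identity
  outside {0..<n} (so that permutations are exactly those satisfying "permutes").\<close>

definition skew_morphism :: "nat \<Rightarrow> (nat \<Rightarrow> nat) \<Rightarrow> bool" where
  "skew_morphism n \<phi> \<longleftrightarrow>
     \<phi> permutes {0..<n} \<and> \<phi> 0 = 0 \<and>
     (\<forall>a<n. \<exists>i. \<forall>b<n. \<phi> ((a + b) mod n) = (\<phi> a + (\<phi> ^^ i) b) mod n)"

definition skew_ord :: "(nat \<Rightarrow> nat) \<Rightarrow> nat" where
  "skew_ord \<phi> = (LEAST k. 0 < k \<and> \<phi> ^^ k = id)"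

definition skew_pi :: "nat \<Rightarrow> (nat \<Rightarrow> nat) \<Rightarrow> nat \<Rightarrow> nat" where
  "skew_pi n \<phi> a =
     (if \<phi> = id then 1
      else (THE i. 1 \<le> i \<and> i < skew_ord \<phi> \<and>
              (\<forall>b<n. \<phi> ((a + b) mod n) = (\<phi> a + (\<phi> ^^ i) b) mod n)))"

definition skew_sigma :: "nat \<Rightarrow> (nat \<Rightarrow> nat) \<Rightarrow> nat \<Rightarrow> nat \<Rightarrow> nat" where
  "skew_sigma n \<phi> x y = (\<Sum>i<x. skew_pi n \<phi> ((\<phi> ^^ i) y)) mod skew_ord \<phi>"

text \<open>Derived skew morphism, a function on Z_ord (identity outside {0..<ord}).
  The element 1 of Z_n is 1 mod n.\<close>
definition derived :: "nat \<Rightarrow> (nat \<Rightarrow> nat) \<Rightarrow> (nat \<Rightarrow> nat)" where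
  "derived n \<phi> = (\<lambda>a. if a < skew_ord \<phi> then skew_sigma n \<phi> a (1 mod n) else a)"

definition deriv_step :: "nat \<times> (nat \<Rightarrow> nat) \<Rightarrow> nat \<times> (nat \<Rightarrow> nat)" where
  "deriv_step x = (skew_ord (snd x), derived (fst x) (snd x))"

definition complexity :: "nat \<Rightarrow> (nat \<Rightarrow> nat) \<Rightarrow> nat" where
  "complexity n \<phi> =
     (THE c. 2 \<le> fst ((deriv_step ^^ c) (n, \<phi>)) \<and> fst ((deriv_step ^^ Suc c) (n, \<phi>)) = 1)"

end

theory Submission
  imports Defs "HOL-Combinatorics.Cycles"
begin

text \<open>
  A power of a skew morphism \<open>\<phi>\<close> of \<open>Z_n\<close> that fixes the generator \<open>1\<close> is
  the identity, and the orbit of \<open>1\<close> misses \<open>0\<close>; hence \<open>ord \<phi> < n\<close>. Moreover \<open>ord \<phi>'\<close>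
  divides \<open>n\<close>. So two derivation steps lead from \<open>Z_(p ^ e)\<close> to some \<open>Z_(p ^ e')\<close> with
  \<open>e' < e\<close>, and after \<open>2 e\<close> steps the group is trivial.

  Let \<open>s = (p - 1)\<^sup>2\<close> and \<open>S x = \<Sum>k<x. s ^ k\<close>. As \<open>s \<equiv> 1 (mod p)\<close>, \<open>S\<close> is
  a bijection of \<open>Z_(p ^ e)\<close> with \<open>S (a + b) = S a + s ^ a * S b\<close>, and transporting
  multiplication by \<open>p - 1\<close> along \<open>S\<close> gives a skew morphism \<open>phi_e\<close> of \<open>Z_(p ^ e)\<close> with
  power function \<open>1 + 2 a + (2 p ^ (e - 1) - 2) phi_e(a)\<close>. Its second derived skew morphism is
  \<open>phi_(e - 1)\<close>, and \<open>phi_1 \<noteq> id\<close>, so \<open>phi_e\<close> reaches \<open>Z_1\<close> only after \<open>2 e\<close> steps.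
\<close>

lemma add_mod_cancel_less:
  fixes n :: nat
  assumes "x < n" "y < n" "(a + x) mod n = (a + y) mod n"
  shows "x = y"
proof -
  have "x mod n = y mod n"
    using assms(3) by (simp add: nat_mod_eq_iff)
  then show ?thesis
    using assms(1,2) by simp
qed

lemma add_mod_eq_imp_dvd:
  fixes a b n :: nat
  assumes "(a + b) mod n = a mod n"
  shows "n dvd b"
  using assms mod_eq_dvd_iff_nat[of a "a + b" n] by simp

lemma mod_mult_cancel_coprime:
  fixes a x y n :: nat
  assumes "coprime a n" "(a * x) mod n = (a * y) mod n"
  shows "x mod n = y mod n"
proof -
  have "int (a * x) mod int n = int (a * y) mod int n"
    using assms(2) by (metis of_nat_mod)
  then have "int n dvd int a * (int x - int y)"
    by (simp add: mod_eq_dvd_iff algebra_simps)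
  moreover have "coprime (int n) (int a)"
    using assms(1) by (simp add: coprime_commute)
  ultimately have "int n dvd int x - int y"
    using coprime_dvd_mult_right_iff by blast
  then show ?thesis
    by (metis mod_eq_dvd_iff of_nat_eq_iff of_nat_mod)
qed

lemma skew_ord_le: "0 < k \<Longrightarrow> g ^^ k = id \<Longrightarrow> skew_ord g \<le> k"
  unfolding skew_ord_def by (rule Least_le) simp

lemma
  assumes "permutation g"
  shows skew_ord_pos: "0 < skew_ord g" and funpow_skew_ord: "g ^^ skew_ord g = id"
proof -
  have "\<exists>k. 0 < k \<and> g ^^ k = id"
    using permutation_is_nilpotent[OF assms] by blast
  then have "0 < skew_ord g \<and> g ^^ skew_ord g = id"
    unfolding skew_ord_def by (rule LeastI_ex)
  then show "0 < skew_ord g" "g ^^ skew_ord g = id" by auto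
qed

lemma funpow_mod_skew_ord:
  assumes "permutation g"
  shows "g ^^ (a mod skew_ord g) = g ^^ a"
proof -
  have "g ^^ (skew_ord g * (a div skew_ord g)) = id"
    by (simp add: funpow_mult[symmetric] funpow_skew_ord[OF assms])
  moreover have "g ^^ a = g ^^ (a mod skew_ord g) \<circ> g ^^ (skew_ord g * (a div skew_ord g))"
    by (simp flip: funpow_add)
  ultimately show ?thesis by simp
qed

lemma skew_ord_dvd_iff:
  assumes "permutation g"
  shows "skew_ord g dvd k \<longleftrightarrow> g ^^ k = id"
proof
  assume "skew_ord g dvd k"
  then show "g ^^ k = id"
    using funpow_mod_skew_ord[OF assms, of k] by simp
next
  assume "g ^^ k = id"
  then have "g ^^ (k mod skew_ord g) = id"
    by (simp add: funpow_mod_skew_ord[OF assms])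
  show "skew_ord g dvd k"
  proof (rule ccontr)
    assume "\<not> skew_ord g dvd k"
    then have "skew_ord g \<le> k mod skew_ord g"
      using skew_ord_le \<open>g ^^ (k mod skew_ord g) = id\<close> by (simp add: dvd_eq_mod_eq_0)
    then show False
      using mod_less_divisor[OF skew_ord_pos[OF assms], of k] by simp
  qed
qed

lemma funpow_eq_iff_mod_skew_ord:
  assumes "permutation g"
  shows "g ^^ a = g ^^ b \<longleftrightarrow> a mod skew_ord g = b mod skew_ord g"
proof -
  have *: "g ^^ a = g ^^ b \<longleftrightarrow> a mod skew_ord g = b mod skew_ord g" if "a \<le> b" for a b
  proof -
    have "g ^^ b = g ^^ (b - a) \<circ> g ^^ a"
      using that by (simp flip: funpow_add)
    moreover have "bij (g ^^ a)"
      by (simp add: assms permutation_bijective)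
    ultimately have "g ^^ a = g ^^ b \<longleftrightarrow> g ^^ (b - a) = id"
      by (metis bij_is_surj id_comp surj_fun_eq)
    also have "\<dots> \<longleftrightarrow> a mod skew_ord g = b mod skew_ord g"
      using skew_ord_dvd_iff[OF assms, of "b - a"] mod_eq_dvd_iff_nat[OF that, of "skew_ord g"]
      by auto
    finally show ?thesis .
  qed
  show ?thesis
    using *[of a b] *[of b a] by (cases "a \<le> b") auto
qed

lemma skew_ord_id: "skew_ord id = 1"
  using skew_ord_le[of 1 id] skew_ord_pos[OF permutation_id] by simp

lemma skew_ord_ge_2:
  assumes "permutation g" "g \<noteq> id"
  shows "2 \<le> skew_ord g"
  using skew_ord_pos[OF assms(1)] funpow_skew_ord[OF assms(1)] assms(2)
  by (cases "skew_ord g = 1") auto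

lemma skew_morphism_1_eq_id: "skew_morphism 1 g \<Longrightarrow> g = id"
  unfolding skew_morphism_def permutes_def by (metis atLeastLessThan_iff eq_id_iff less_one)


section \<open>Skew morphisms of cyclic groups\<close>

locale skew_morphism_Zn =
  fixes n :: nat and f :: "nat \<Rightarrow> nat"
  assumes skew: "skew_morphism n f" and n_pos: "0 < n"
begin

abbreviation "m \<equiv> skew_ord f"
abbreviation "\<pi> \<equiv> skew_pi n f"
abbreviation "D \<equiv> derived n f"

lemma f_permutes: "f permutes {0..<n}"
  and f_0: "f 0 = 0"
  and skew_law_ex: "a < n \<Longrightarrow> \<exists>i. \<forall>b<n. f ((a + b) mod n) = (f a + (f ^^ i) b) mod n"
  using skew unfolding skew_morphism_def by auto

lemma permutation_f: "permutation f"
  using f_permutes permutation_permutes by blast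

lemma m_pos: "0 < m"
  using skew_ord_pos[OF permutation_f] .

lemma funpow_m: "f ^^ m = id"
  using funpow_skew_ord[OF permutation_f] .

lemma funpow_mod_m: "f ^^ (a mod m) = f ^^ a"
  using funpow_mod_skew_ord[OF permutation_f] .

lemma funpow_less: "x < n \<Longrightarrow> (f ^^ k) x < n"
  using permutes_in_image[OF permutes_funpow[OF f_permutes]] by auto

lemma funpow_fixes_0: "(f ^^ k) 0 = 0"
  by (induction k) (simp_all add: f_0)

lemma mod_m_eqI:
  assumes "\<And>y. y < n \<Longrightarrow> (f ^^ i) y = (f ^^ j) y"
  shows "i mod m = j mod m"
proof -
  have "f ^^ i = f ^^ j"
  proof
    fix y
    show "(f ^^ i) y = (f ^^ j) y"
      using assms permutes_not_in[OF permutes_funpow[OF f_permutes]] by (cases "y < n") auto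
  qed
  then show ?thesis
    using funpow_eq_iff_mod_skew_ord[OF permutation_f] by simp
qed

lemma skew_law_mod_m_unique:
  assumes "a < n"
    and "\<forall>b<n. f ((a + b) mod n) = (f a + (f ^^ i) b) mod n"
    and "\<forall>b<n. f ((a + b) mod n) = (f a + (f ^^ j) b) mod n"
  shows "i mod m = j mod m"
proof (rule mod_m_eqI)
  fix y assume "y < n"
  then have "(f a + (f ^^ i) y) mod n = (f a + (f ^^ j) y) mod n"
    using assms by auto
  then show "(f ^^ i) y = (f ^^ j) y"
    using add_mod_cancel_less funpow_less \<open>y < n\<close> by blast
qed

text \<open>Putting \<open>b = n - a\<close> shows \<open>f a = a\<close>; so \<open>f\<close> is a translation fixing \<open>0\<close>.\<close>
lemma skew_law_trivial_imp_id:
  assumes a: "a < n" and law: "\<forall>b<n. f ((a + b) mod n) = (f a + b) mod n"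
  shows "f = id"
proof -
  have fa: "f a = a"
  proof (cases "a = 0")
    case True
    then show ?thesis using f_0 by simp
  next
    case False
    then have "0 = (f a + (n - a)) mod n"
      using law[rule_format, of "n - a"] a f_0 by simp
    also have "0 = (a + (n - a)) mod n"
      using a by simp
    finally show ?thesis
      using add_mod_cancel_less[of "f a" n a "n - a"] funpow_less[of a 1] a by (simp add: add.commute)
  qed
  show ?thesis
  proof
    fix y
    show "f y = id y"
    proof (cases "y < n")
      case True
      have "(a + (y + (n - a)) mod n) mod n = y"
        using True a by (simp add: mod_add_right_eq)
      then show ?thesis
        using law[rule_format, of "(y + (n - a)) mod n"] fa n_pos by simp
    next
      case False
      then show ?thesis
        using permutes_not_in[OF f_permutes] by simp
    qed
  qed
qed

lemma skew_pi_eqI: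
  assumes "f \<noteq> id" "a < n" "1 \<le> i" "i < m"
    and "\<forall>b<n. f ((a + b) mod n) = (f a + (f ^^ i) b) mod n"
  shows "\<pi> a = i"
  unfolding skew_pi_def
proof (simp add: assms(1), rule the_equality)
  show "Suc 0 \<le> i \<and> i < m \<and> (\<forall>b<n. f ((a + b) mod n) = (f a + (f ^^ i) b) mod n)"
    using assms by simp
  fix j assume j: "Suc 0 \<le> j \<and> j < m \<and> (\<forall>b<n. f ((a + b) mod n) = (f a + (f ^^ j) b) mod n)"
  then have "j mod m = i mod m"
    using skew_law_mod_m_unique[OF assms(2), of j i] assms(5) by blast
  then show "j = i"
    using j assms(4) by simp
qed

lemma skew_pi_law:
  assumes "a < n" "b < n"
  shows "f ((a + b) mod n) = (f a + (f ^^ \<pi> a) b) mod n"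
proof (cases "f = id")
  case True
  then show ?thesis by simp
next
  case nid: False
  obtain i where "\<forall>b<n. f ((a + b) mod n) = (f a + (f ^^ i) b) mod n"
    using skew_law_ex[OF assms(1)] by blast
  then have law: "\<forall>b<n. f ((a + b) mod n) = (f a + (f ^^ (i mod m)) b) mod n"
    by (simp add: funpow_mod_m)
  have "i mod m \<noteq> 0"
  proof
    assume "i mod m = 0"
    then have "\<forall>b<n. f ((a + b) mod n) = (f a + b) mod n"
      using law by simp
    then show False
      using skew_law_trivial_imp_id[OF assms(1)] nid by blast
  qed
  then have "\<pi> a = i mod m"
    using skew_pi_eqI[OF nid assms(1) _ _ law] m_pos by simp
  then show ?thesis
    using law assms(2) by simp
qed

lemma skew_pi_unique:
  assumes "a < n" "\<forall>b<n. f ((a + b) mod n) = (f a + (f ^^ i) b) mod n"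
  shows "i mod m = \<pi> a mod m"
  using skew_law_mod_m_unique[OF assms] skew_pi_law[OF assms(1)] by blast

lemma skew_pi_0: "\<pi> 0 = 1"
proof (cases "f = id")
  case True
  then show ?thesis by (simp add: skew_pi_def)
next
  case False
  then have "1 < m"
    using funpow_m m_pos by (cases "m = 1") auto
  then show ?thesis
    using skew_pi_eqI[OF False n_pos, of 1] f_0 funpow_less[of _ 1] by simp
qed

text \<open>The paper's \<open>\<sigma>(k, x)\<close> before reduction modulo \<open>m\<close>:
  \<open>skew_sigma n f k x = sigma k x mod m\<close>.\<close>
definition sigma :: "nat \<Rightarrow> nat \<Rightarrow> nat" where
  "sigma k x = (\<Sum>i<k. \<pi> ((f ^^ i) x))"

lemma sigma_Suc: "sigma (Suc k) x = sigma k x + \<pi> ((f ^^ k) x)"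
  by (simp add: sigma_def)

lemma sigma_add: "sigma (a + b) x = sigma a x + sigma b ((f ^^ a) x)"
proof (induction b)
  case (Suc b)
  have "(f ^^ (a + b)) x = (f ^^ b) ((f ^^ a) x)"
    by (metis add.commute comp_apply funpow_add)
  then show ?case
    using Suc by (simp add: sigma_Suc)
qed (simp add: sigma_def)

lemma sigma_at_0: "sigma a 0 = a"
  by (simp add: sigma_def funpow_fixes_0 skew_pi_0)

lemma funpow_skew_law:
  assumes "x < n" "y < n"
  shows "(f ^^ k) ((x + y) mod n) = ((f ^^ k) x + (f ^^ sigma k x) y) mod n"
proof (induction k)
  case 0
  then show ?case
    using assms by (simp add: sigma_def)
next
  case (Suc k)
  have "(f ^^ Suc k) ((x + y) mod n) = f (((f ^^ k) x + (f ^^ sigma k x) y) mod n)"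
    using Suc by simp
  also have "\<dots> = (f ((f ^^ k) x) + (f ^^ \<pi> ((f ^^ k) x)) ((f ^^ sigma k x) y)) mod n"
    using skew_pi_law funpow_less assms by simp
  also have "(f ^^ \<pi> ((f ^^ k) x)) ((f ^^ sigma k x) y) = (f ^^ sigma (Suc k) x) y"
    by (metis sigma_Suc add.commute comp_apply funpow_add)
  finally show ?case
    by simp
qed

lemma sigma_period:
  assumes "x < n"
  shows "sigma m x mod m = 0"
proof -
  have "sigma m x mod m = 0 mod m"
  proof (rule mod_m_eqI)
    fix y
    assume "y < n"
    then have "(x + y) mod n = (x + (f ^^ sigma m x) y) mod n"
      using funpow_skew_law[OF assms, of y m] funpow_m assms by simp
    then show "(f ^^ sigma m x) y = (f ^^ 0) y"
      using add_mod_cancel_less funpow_less \<open>y < n\<close> by (metis funpow_0)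
  qed
  then show ?thesis
    by simp
qed

lemma sigma_mod_m:
  assumes "x < n"
  shows "sigma (t mod m) x mod m = sigma t x mod m"
proof -
  have "sigma (q * m + r) x mod m = sigma r x mod m" for q r
  proof (induction q)
    case (Suc q)
    have "sigma (Suc q * m + r) x = sigma m x + sigma (q * m + r) x"
      using sigma_add[of m "q * m + r" x] funpow_m by (simp add: add.assoc)
    then show ?case
      using sigma_period[OF assms] Suc by (metis mod_add_left_eq add_0)
  qed simp
  from this[of "t div m" "t mod m"] show ?thesis
    by simp
qed

lemma sigma_cocycle:
  assumes x: "x < n" and z: "z < n"
  shows "sigma a ((x + z) mod n) mod m = sigma (sigma a x) z mod m"
proof (rule mod_m_eqI)
  fix y
  assume y: "y < n"
  define x' where "x' = (x + z) mod n"
  have x': "x' < n"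
    using n_pos x'_def by simp
  have "(x' + y) mod n = (x + (z + y) mod n) mod n"
    unfolding x'_def by (simp add: mod_add_left_eq mod_add_right_eq add.assoc)
  then have "(f ^^ a) ((x' + y) mod n) = ((f ^^ a) x + (f ^^ sigma a x) ((z + y) mod n)) mod n"
    using funpow_skew_law[OF x, of "(z + y) mod n" a] n_pos by simp
  also have "\<dots> = ((f ^^ a) x + (f ^^ sigma a x) z + (f ^^ sigma (sigma a x) z) y) mod n"
    using funpow_skew_law[OF z y] by (simp add: mod_add_right_eq add.assoc)
  also have "\<dots> = ((f ^^ a) x' + (f ^^ sigma (sigma a x) z) y) mod n"
    using funpow_skew_law[OF x z, of a] unfolding x'_def by (simp add: mod_add_left_eq)
  finally have "((f ^^ a) x' + (f ^^ sigma a x') y) mod n = ((f ^^ a) x' + (f ^^ sigma (sigma a x) z) y) mod n"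
    using funpow_skew_law[OF x' y] by simp
  then show "(f ^^ sigma a ((x + z) mod n)) y = (f ^^ sigma (sigma a x) z) y"
    using add_mod_cancel_less funpow_less y x'_def by blast
qed

lemma derived_less_m: "t < m \<Longrightarrow> D t = sigma t (1 mod n) mod m"
  by (simp add: derived_def skew_sigma_def sigma_def)

lemma derived_not_less_m: "m \<le> t \<Longrightarrow> D t = t"
  by (simp add: derived_def)

lemma funpow_derived_less_m: "t < m \<Longrightarrow> (D ^^ k) t < m"
  by (induction k) (simp_all add: derived_less_m m_pos)

lemma sigma_eq_funpow_derived: "sigma a (x mod n) mod m = (D ^^ x) (a mod m)"
proof (induction x)
  case 0
  then show ?case
    by (simp add: sigma_at_0)
next
  case (Suc x)
  have xn: "x mod n < n" "1 mod n < n"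
    using n_pos by auto
  have "Suc x mod n = (x mod n + 1 mod n) mod n"
    by (metis Suc_eq_plus1 mod_add_eq)
  then have "sigma a (Suc x mod n) mod m = sigma (sigma a (x mod n)) (1 mod n) mod m"
    using sigma_cocycle[OF xn] by simp
  also have "\<dots> = sigma (sigma a (x mod n) mod m) (1 mod n) mod m"
    using sigma_mod_m[OF xn(2)] by simp
  also have "\<dots> = D (sigma a (x mod n) mod m)"
    using derived_less_m m_pos by simp
  finally show ?case
    using Suc by simp
qed

lemma funpow_derived_n: "D ^^ n = id"
proof
  fix t
  show "(D ^^ n) t = id t"
  proof (cases "t < m")
    case True
    then show ?thesis
      using sigma_eq_funpow_derived[of t n] sigma_at_0 by simp
  next
    case False
    have "(D ^^ k) t = t" for k
      using False by (induction k) (simp_all add: derived_not_less_m)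
    then show ?thesis
      by simp
  qed
qed

lemma derived_permutes: "D permutes {0..<m}"
proof (rule bij_imp_permutes)
  have "(D ^^ (n - 1)) (D t) = t" for t
    using funpow_derived_n n_pos by (metis Suc_diff_1 comp_apply funpow_Suc_right id_apply)
  then have inj: "inj_on D {0..<m}"
    by (metis inj_onI)
  moreover have "D ` {0..<m} \<subseteq> {0..<m}"
    using funpow_derived_less_m[of _ 1] by auto
  ultimately show "bij_betw D {0..<m} {0..<m}"
    by (simp add: bij_betw_def endo_inj_surj)
next
  fix x
  assume "x \<notin> {0..<m}"
  then show "D x = x"
    by (simp add: derived_not_less_m)
qed

lemma derived_skew_law:
  assumes a: "a < m" and b: "b < m"
  shows "D ((a + b) mod m) = (D a + (D ^^ (f ^^ a) (1 mod n)) b) mod m"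
proof -
  have one: "1 mod n < n"
    using n_pos by simp
  have "D ((a + b) mod m) = sigma (a + b) (1 mod n) mod m"
    using derived_less_m sigma_mod_m[OF one] m_pos by simp
  also have "\<dots> = (sigma a (1 mod n) mod m + sigma b ((f ^^ a) (1 mod n) mod n) mod m) mod m"
    using funpow_less[OF one] by (simp add: sigma_add mod_add_eq)
  also have "\<dots> = (D a + (D ^^ (f ^^ a) (1 mod n)) b) mod m"
    using sigma_eq_funpow_derived[of b "(f ^^ a) (1 mod n)"] derived_less_m[OF a] b by simp
  finally show ?thesis .
qed

lemma skew_morphism_derived: "skew_morphism m D"
  unfolding skew_morphism_def
proof (intro conjI allI impI)
  show "D permutes {0..<m}"
    by (rule derived_permutes)
  show "D 0 = 0"
    using derived_less_m[of 0] m_pos by (simp add: sigma_def)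
  fix a
  assume "a < m"
  then show "\<exists>i. \<forall>b<m. D ((a + b) mod m) = (D a + (D ^^ i) b) mod m"
    using derived_skew_law by blast
qed

lemma skew_ord_derived_dvd: "skew_ord D dvd n"
  using skew_ord_dvd_iff[of D n] funpow_derived_n derived_permutes permutation_permutes by blast

lemma funpow_derived_1_eq_skew_pi: "x < n \<Longrightarrow> (D ^^ x) (1 mod m) = \<pi> x mod m"
  using sigma_eq_funpow_derived[of 1 x] by (simp add: sigma_def)

lemma skew_morphism_eq_sum: "x < n \<Longrightarrow> f x = (\<Sum>i<x. (f ^^ \<pi> i) (1 mod n)) mod n"
proof (induction x)
  case 0
  then show ?case
    by (simp add: f_0)
next
  case (Suc x)
  then have "(x + 1 mod n) mod n = Suc x"
    by simp
  then have "f (Suc x) = (f x + (f ^^ \<pi> x) (1 mod n)) mod n"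
    using skew_pi_law[of x "1 mod n"] Suc.prems n_pos by simp
  then show ?case
    using Suc by (simp add: mod_add_left_eq)
qed


lemma least_power_1_less:
  assumes "2 \<le> n"
  shows "least_power f 1 < n"
proof -
  have "set (support f 1) \<subseteq> {1..<n}"
  proof
    fix y
    assume "y \<in> set (support f 1)"
    then obtain i where y: "y = (f ^^ i) 1"
      by auto
    then have "y \<noteq> 0"
      using funpow_fixes_0 permutes_inj[OF permutes_funpow[OF f_permutes]]
      by (metis injD zero_neq_one)
    moreover have "y < n"
      using y funpow_less assms by simp
    ultimately show "y \<in> {1..<n}"
      by simp
  qed
  then have "length (support f 1) \<le> card {1..<n}"
    using cycle_of_permutation[OF permutation_f] by (metis card_mono distinct_card finite_atLeastLessThan)
  then show ?thesis
    using assms by simp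
qed

lemma least_power_1_dvd_sigma:
  assumes "2 \<le> n" "(f ^^ t) 1 = 1"
  shows "least_power f 1 dvd sigma t 1"
proof -
  define k where "k = least_power f 1"
  define s where "s = sigma t 1"
  have "k dvd m"
    using least_power_dvd[OF permutation_f] funpow_m k_def by simp
  then obtain j where j: "m = k * j"
    by blast
  have "k dvd t"
    using least_power_dvd[OF permutation_f] assms(2) k_def by simp
  then obtain q where q: "t = k * q"
    by blast
  have one: "(1::nat) < n"
    using assms(1) by simp
  have iter: "(f ^^ (t * i)) ((1 + y) mod n) = (1 + (f ^^ (s * i)) y) mod n" if "y < n" for y i
  proof (induction i)
    case (Suc i)
    have "(f ^^ (t * Suc i)) ((1 + y) mod n) = (f ^^ t) ((1 + (f ^^ (s * i)) y) mod n)"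
      using Suc by (simp add: funpow_add)
    also have "\<dots> = (1 + (f ^^ s) ((f ^^ (s * i)) y)) mod n"
      using funpow_skew_law[OF one funpow_less[OF that], of t] assms(2) s_def by simp
    finally show ?case
      by (simp add: funpow_add)
  qed simp
  have "f ^^ (t * j) = f ^^ (m * q)"
    using j q by (simp add: mult.commute mult.left_commute)
  also have "\<dots> = id"
    using skew_ord_dvd_iff[OF permutation_f, of "m * q"] by simp
  finally have "f ^^ (t * j) = id" .
  have "(s * j) mod m = 0 mod m"
  proof (rule mod_m_eqI)
    fix y
    assume y: "y < n"
    have "(1 + y) mod n = (1 + (f ^^ (s * j)) y) mod n"
      using iter[OF y, of j] \<open>f ^^ (t * j) = id\<close> by simp
    then show "(f ^^ (s * j)) y = (f ^^ 0) y"
      using add_mod_cancel_less funpow_less y by (metis funpow_0)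
  qed
  then have "k * j dvd s * j"
    using j by auto
  then show ?thesis
    using j m_pos k_def s_def by simp
qed

text \<open>With \<open>k\<close> the length of the orbit of \<open>1\<close>, the derived skew morphism preserves multiples
  of \<open>k\<close>; hence \<open>k\<close> divides every \<open>sigma t x\<close>, and the skew law propagates \<open>(f ^^ t) x = x\<close>
  from \<open>x\<close> to \<open>x + 1\<close>.\<close>
lemma funpow_fixing_1_eq_id:
  assumes n: "2 \<le> n" and t: "(f ^^ t) 1 = 1"
  shows "f ^^ t = id"
proof -
  define k where "k = least_power f 1"
  have dvd_iff: "k dvd u \<longleftrightarrow> (f ^^ u) 1 = 1" for u
    using least_power_dvd[OF permutation_f] k_def by simp
  have "k dvd m"
    using dvd_iff funpow_m by simp
  have derived_dvd: "k dvd D u" if "k dvd u" "u < m" for u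
  proof -
    have "k dvd sigma u 1"
      using least_power_1_dvd_sigma[OF n] dvd_iff that(1) k_def by blast
    then have "k dvd sigma u 1 mod m"
      using \<open>k dvd m\<close> by (simp add: dvd_mod)
    then show ?thesis
      using derived_less_m[OF that(2)] n by simp
  qed
  have funpow_derived_dvd: "k dvd (D ^^ x) (t mod m)" for x
  proof (induction x)
    case 0
    show ?case
      using t by (simp add: dvd_iff funpow_mod_m)
  next
    case (Suc x)
    then show ?case
      using derived_dvd funpow_derived_less_m m_pos by simp
  qed
  have "(f ^^ t) x = x" if "x < n" for x
    using that
  proof (induction x)
    case (Suc x)
    then have x: "x < n" and "(1::nat) < n"
      by simp_all
    have "(f ^^ sigma t x) 1 = (f ^^ (sigma t x mod m)) 1"
      by (simp add: funpow_mod_m)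
    also have "sigma t x mod m = (D ^^ x) (t mod m)"
      using sigma_eq_funpow_derived[of t x] x by simp
    finally have "(f ^^ sigma t x) 1 = 1"
      using funpow_derived_dvd dvd_iff by simp
    then show ?case
      using funpow_skew_law[OF x \<open>1 < n\<close>, of t] Suc by simp
  qed (simp add: funpow_fixes_0)
  then show ?thesis
    using permutes_not_in[OF permutes_funpow[OF f_permutes]] by (metis atLeastLessThan_iff eq_id_iff)
qed

lemma skew_ord_less:
  assumes "2 \<le> n"
  shows "m < n"
proof -
  have "f ^^ least_power f 1 = id"
    using funpow_fixing_1_eq_id[OF assms] least_power_of_permutation[OF permutation_f] by blast
  then have "m \<le> least_power f 1"
    using skew_ord_le least_power_of_permutation(2)[OF permutation_f] by blast
  then show ?thesis
    using least_power_1_less[OF assms] by simp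
qed


lemma skew_ord_derived_le: "skew_ord D \<le> m"
proof (cases "m = 1")
  case True
  then have "D = id"
    using skew_morphism_1_eq_id skew_morphism_derived by simp
  then show ?thesis
    using skew_ord_id m_pos by simp
next
  case False
  interpret derived: skew_morphism_Zn m D
    using skew_morphism_derived m_pos by unfold_locales
  show ?thesis
    using derived.skew_ord_less False m_pos by simp
qed

lemma skew_ord_derived_less: "2 \<le> n \<Longrightarrow> skew_ord D < n"
  using skew_ord_derived_le skew_ord_less by (meson le_less_trans)

lemma second_derived_eq:
  assumes x: "x < skew_ord D"
  shows "derived m D x = f x mod skew_ord D"
proof -
  interpret derived: skew_morphism_Zn m D
    using skew_morphism_derived m_pos by unfold_locales
  define n' where "n' = skew_ord D"
  have "n' dvd n"
    using skew_ord_derived_dvd n'_def by simp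
  then have xn: "x < n"
    using x n_pos n'_def by (meson dvd_imp_le less_le_trans)
  have pi_derived: "derived.\<pi> ((D ^^ i) (1 mod m)) mod n' = (f ^^ \<pi> i) (1 mod n) mod n'"
    if "i < x" for i
  proof -
    define t where "t = \<pi> i mod m"
    have "t < m"
      using t_def m_pos by simp
    have "(D ^^ i) (1 mod m) = t"
      using funpow_derived_1_eq_skew_pi[of i] that xn t_def by simp
    moreover have "(f ^^ t) (1 mod n) mod n' = derived.\<pi> t mod n'"
      using derived.skew_pi_unique[OF \<open>t < m\<close>] derived_skew_law[OF \<open>t < m\<close>] n'_def by blast
    moreover have "f ^^ t = f ^^ \<pi> i"
      using funpow_mod_m t_def by simp
    ultimately show ?thesis
      by simp
  qed
  have "derived m D x = derived.sigma x (1 mod m) mod n'"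
    using derived.derived_less_m x n'_def by simp
  also have "\<dots> = (\<Sum>i<x. derived.\<pi> ((D ^^ i) (1 mod m)) mod n') mod n'"
    unfolding derived.sigma_def by (simp add: mod_sum_eq)
  also have "\<dots> = (\<Sum>i<x. (f ^^ \<pi> i) (1 mod n) mod n') mod n'"
    using pi_derived by simp
  also have "\<dots> = f x mod n'"
    using skew_morphism_eq_sum[OF xn] \<open>n' dvd n\<close> by (simp add: mod_sum_eq mod_mod_cancel)
  finally show ?thesis
    using n'_def by simp
qed

lemma skew_law_additive_if_skew_ord_derived_dvd:
  assumes "a < n" "skew_ord D dvd a" "b < n"
  shows "f ((a + b) mod n) = (f a + f b) mod n"
proof -
  have "permutation D"
    using derived_permutes permutation_permutes by blast
  then have "D ^^ a = id"
    using assms(2) skew_ord_dvd_iff by blast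
  then have "\<pi> a mod m = 1 mod m"
    using funpow_derived_1_eq_skew_pi[OF assms(1)] by simp
  then have "f ^^ \<pi> a = f ^^ 1"
    using funpow_mod_m[of "\<pi> a"] funpow_mod_m[of 1] by metis
  then show ?thesis
    using skew_pi_law[OF assms(1,3)] by simp
qed

end

section \<open>Complexity\<close>

definition skew_pair :: "nat \<times> (nat \<Rightarrow> nat) \<Rightarrow> bool" where
  "skew_pair X \<longleftrightarrow> 0 < fst X \<and> skew_morphism (fst X) (snd X)"

lemma fst_deriv_step: "fst (deriv_step X) = skew_ord (snd X)"
  by (simp add: deriv_step_def)

lemma skew_pair_deriv_step: "skew_pair X \<Longrightarrow> skew_pair (deriv_step X)"
proof -
  assume "skew_pair X"
  then interpret skew_morphism_Zn "fst X" "snd X"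
    by unfold_locales (auto simp: skew_pair_def)
  show ?thesis
    unfolding skew_pair_def deriv_step_def using skew_morphism_derived m_pos by simp
qed

lemma skew_pair_funpow_deriv_step: "skew_pair X \<Longrightarrow> skew_pair ((deriv_step ^^ c) X)"
  by (induction c) (simp_all add: skew_pair_deriv_step)

lemma funpow_deriv_step_trivial_mono:
  assumes "skew_pair X" "fst ((deriv_step ^^ c) X) = 1" "c \<le> c'"
  shows "fst ((deriv_step ^^ c') X) = 1"
proof -
  have "fst ((deriv_step ^^ (c + d)) X) = 1" for d
  proof (induction d)
    case (Suc d)
    have "skew_morphism 1 (snd ((deriv_step ^^ (c + d)) X))"
      using skew_pair_funpow_deriv_step[OF assms(1), of "c + d"] Suc unfolding skew_pair_def
      by metis
    then have "snd ((deriv_step ^^ (c + d)) X) = id"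
      by (rule skew_morphism_1_eq_id)
    then show ?case
      by (simp add: fst_deriv_step skew_ord_id)
  qed (use assms(2) in simp)
  from this[of "c' - c"] show ?thesis
    using assms(3) by simp
qed

lemma complexity_eqI:
  assumes "skew_pair X" "2 \<le> fst ((deriv_step ^^ c) X)" "fst ((deriv_step ^^ Suc c) X) = 1"
  shows "complexity (fst X) (snd X) = c"
  unfolding complexity_def
proof (rule the_equality)
  show "2 \<le> fst ((deriv_step ^^ c) (fst X, snd X)) \<and> fst ((deriv_step ^^ Suc c) (fst X, snd X)) = 1"
    using assms(2,3) by simp
next
  fix c'
  assume c': "2 \<le> fst ((deriv_step ^^ c') (fst X, snd X)) \<and> fst ((deriv_step ^^ Suc c') (fst X, snd X)) = 1"
  show "c' = c"
  proof (rule ccontr)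
    assume "c' \<noteq> c"
    then consider "Suc c \<le> c'" | "Suc c' \<le> c"
      by linarith
    then show False
    proof cases
      case 1
      then have "fst ((deriv_step ^^ c') X) = 1"
        using funpow_deriv_step_trivial_mono[OF assms(1,3)] by blast
      then show False
        using c' by simp
    next
      case 2
      have "fst ((deriv_step ^^ Suc c') X) = 1"
        using c' by simp
      then have "fst ((deriv_step ^^ c) X) = 1"
        using funpow_deriv_step_trivial_mono[OF assms(1) _ 2] by blast
      then show False
        using assms(2) by simp
    qed
  qed
qed

lemma complexity_less:
  assumes X: "skew_pair X" "2 \<le> fst X" and c: "fst ((deriv_step ^^ c) X) = 1"
  shows "complexity (fst X) (snd X) < c"
proof -
  define c0 where "c0 = (LEAST c. fst ((deriv_step ^^ c) X) = 1)"
  have c0: "fst ((deriv_step ^^ c0) X) = 1" "c0 \<le> c"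
    using c unfolding c0_def by (auto intro: LeastI Least_le)
  then obtain c1 where c1: "c0 = Suc c1"
    using X(2) by (cases c0) auto
  then have "fst ((deriv_step ^^ c1) X) \<noteq> 1"
    using not_less_Least[of c1 "\<lambda>c. fst ((deriv_step ^^ c) X) = 1"] c0_def by simp
  moreover have "0 < fst ((deriv_step ^^ c1) X)"
    using skew_pair_funpow_deriv_step[OF X(1)] by (simp add: skew_pair_def)
  ultimately have "complexity (fst X) (snd X) = c1"
    using complexity_eqI[OF X(1)] c0 c1 by simp
  then show ?thesis
    using c0 c1 by simp
qed

lemma deriv_step_twice:
  "(deriv_step ^^ 2) (n, f) = (skew_ord (derived n f), derived (skew_ord f) (derived n f))"
  by (simp add: deriv_step_def numeral_2_eq_2)

lemma deriv_step_twice_prime_power: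
  assumes p: "prime p" and e: "0 < e" and f: "skew_morphism (p ^ e) f"
  obtains e' f' where "e' < e" "skew_morphism (p ^ e') f'"
    "(deriv_step ^^ 2) (p ^ e, f) = (p ^ e', f')"
proof -
  have "p \<le> p ^ e"
    using e prime_ge_1_nat[OF p] by (simp add: self_le_power)
  then have "2 \<le> p ^ e"
    using prime_ge_2_nat[OF p] by linarith
  interpret skew_morphism_Zn "p ^ e" f
    using f p by unfold_locales (simp_all add: prime_gt_0_nat)
  interpret derived: skew_morphism_Zn m D
    using skew_morphism_derived m_pos by unfold_locales
  obtain e' where e': "e' \<le> e" "skew_ord D = p ^ e'"
    using skew_ord_derived_dvd divides_primepow_nat[OF p] by blast
  moreover have "e' \<noteq> e"
    using skew_ord_derived_less \<open>2 \<le> p ^ e\<close> e' by auto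
  ultimately show thesis
    using that[of e' "derived m D"] derived.skew_morphism_derived deriv_step_twice by simp
qed

lemma funpow_deriv_step_prime_power:
  assumes p: "prime p" and f: "skew_morphism (p ^ e) f"
  shows "fst ((deriv_step ^^ (2 * e)) (p ^ e, f)) = 1"
  using f
proof (induction e arbitrary: f rule: less_induct)
  case (less e)
  show ?case
  proof (cases "e = 0")
    case False
    then obtain e' f' where e': "e' < e" "skew_morphism (p ^ e') f'"
      and step: "(deriv_step ^^ 2) (p ^ e, f) = (p ^ e', f')"
      using deriv_step_twice_prime_power[OF p _ less.prems] by blast
    have "skew_pair (p ^ e', f')"
      using e' p by (simp add: skew_pair_def prime_gt_0_nat)
    then have "fst ((deriv_step ^^ (2 * (e - 1))) (p ^ e', f')) = 1"
      using funpow_deriv_step_trivial_mono less.IH[OF e'] e' by simp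
    moreover have "2 * e = 2 * (e - 1) + 2"
      using False by simp
    then have "(deriv_step ^^ (2 * e)) (p ^ e, f) = (deriv_step ^^ (2 * (e - 1))) (p ^ e', f')"
      using step by (simp only: funpow_add comp_apply)
    ultimately show ?thesis
      by simp
  qed simp
qed

lemma complexity_prime_power_less:
  assumes p: "prime p" and e: "0 < e" and f: "skew_morphism (p ^ e) f"
  shows "complexity (p ^ e) f < 2 * e"
proof -
  have "p \<le> p ^ e"
    using e prime_ge_1_nat[OF p] by (simp add: self_le_power)
  then have "2 \<le> p ^ e"
    using prime_ge_2_nat[OF p] by linarith
  then show ?thesis
    using complexity_less[of "(p ^ e, f)" "2 * e"] funpow_deriv_step_prime_power[OF p f] f
      prime_gt_0_nat[OF p] by (simp add: skew_pair_def)
qed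


section \<open>A skew morphism of maximal complexity\<close>

definition geom_sum :: "nat \<Rightarrow> nat \<Rightarrow> nat" where
  "geom_sum q x = (\<Sum>k<x. q ^ k)"

lemma geom_sum_Suc: "geom_sum q (Suc x) = geom_sum q x + q ^ x"
  by (simp add: geom_sum_def)

lemma geom_sum_add: "geom_sum q (a + b) = geom_sum q a + q ^ a * geom_sum q b"
  by (induction b) (simp_all add: geom_sum_def power_add algebra_simps)

lemma geom_sum_mult: "geom_sum q (k * l) = geom_sum q k * geom_sum (q ^ k) l"
proof (induction l)
  case (Suc l)
  have "k * Suc l = k * l + k"
    by simp
  then have "geom_sum q (k * Suc l) = geom_sum q (k * l) + q ^ (k * l) * geom_sum q k"
    by (simp only: geom_sum_add)
  then show ?case
    using Suc by (simp add: geom_sum_Suc power_mult algebra_simps)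
qed (simp add: geom_sum_def)

lemma power_eq_geom_sum: "(1 + d) ^ k = 1 + d * geom_sum (1 + d) k"
  by (induction k) (simp_all add: geom_sum_def algebra_simps)

lemma one_plus_mult_power_mod_square:
  fixes p w i :: nat
  shows "(1 + p * w) ^ i mod p\<^sup>2 = (1 + i * p * w) mod p\<^sup>2"
proof (induction i)
  case (Suc i)
  have "(1 + p * w) ^ Suc i mod p\<^sup>2 = ((1 + p * w) ^ i mod p\<^sup>2 * (1 + p * w)) mod p\<^sup>2"
    by (simp only: power_Suc2 mod_mult_left_eq)
  also have "\<dots> = ((1 + i * p * w) * (1 + p * w)) mod p\<^sup>2"
    by (simp only: Suc.IH mod_mult_left_eq)
  also have "(1 + i * p * w) * (1 + p * w) = 1 + Suc i * p * w + p\<^sup>2 * (i * w * w)"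
    by (simp add: power2_eq_square algebra_simps)
  finally show ?case
    by simp
qed simp

text \<open>Multiplication by \<open>p - 1\<close>, transported along the bijection
  \<open>x \<mapsto> geom_sum ((p - 1)\<^sup>2) x\<close> of \<open>Z_(p ^ e)\<close>.\<close>
definition extremal_skew :: "nat \<Rightarrow> nat \<Rightarrow> nat \<Rightarrow> nat" where
  "extremal_skew p e x =
    (if x < p ^ e
     then THE y. y < p ^ e \<and>
       geom_sum ((p - 1)\<^sup>2) y mod p ^ e = ((p - 1) * geom_sum ((p - 1)\<^sup>2) x) mod p ^ e
     else x)"

locale odd_prime =
  fixes p :: nat
  assumes prime: "prime p" and odd: "odd p"
begin

definition s :: nat where "s = (p - 1)\<^sup>2"

abbreviation "S \<equiv> geom_sum s"

lemma p_ge_3: "3 \<le> p"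
  using prime_ge_2_nat[OF prime] odd by (cases "p = 2") auto

lemma s_eq: "s = 1 + p * (p - 2)"
proof -
  obtain q where q: "p = q + 2"
    using p_ge_3 by (intro that[of "p - 2"]) simp
  show ?thesis
    unfolding s_def by (simp add: q power2_eq_square algebra_simps)
qed

lemma s_power: "s ^ k = 1 + p * (p - 2) * S k"
  using power_eq_geom_sum[of "p * (p - 2)" k] s_eq by simp

lemma S_mod_p: "S k mod p = k mod p"
proof (induction k)
  case (Suc k)
  have "s ^ k mod p = 1"
    using s_power[of k] p_ge_3 mod_mult_self2[of 1 p "(p - 2) * S k"] by (simp add: mult.assoc)
  then have "S (Suc k) mod p = (k mod p + 1) mod p"
    using Suc by (simp add: geom_sum_Suc mod_add_eq[symmetric])
  then show ?case
    by (simp add: mod_Suc_eq)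
qed (simp add: geom_sum_def)

text \<open>This is where \<open>p\<close> must be odd: \<open>\<Sum>i<p. i = p * (p - 1) div 2\<close> is then a multiple of \<open>p\<close>.\<close>
lemma S_block_mod_square: "geom_sum (s ^ k) p mod p\<^sup>2 = p"
proof -
  define w where "w = (p - 2) * S k"
  have sk: "s ^ k = 1 + p * w"
    using s_power w_def by (simp add: algebra_simps)
  obtain t where t: "p = 2 * t + 1"
    using odd oddE by blast
  have gauss: "(\<Sum>i<p. i) = p * t"
    using gauss_sum_nat[of "2 * t"] t by (simp add: lessThan_Suc_atMost[symmetric] atLeast0AtMost)
  have "geom_sum (s ^ k) p mod p\<^sup>2 = (\<Sum>i<p. (1 + p * w) ^ i mod p\<^sup>2) mod p\<^sup>2"
    unfolding geom_sum_def sk by (simp add: mod_sum_eq)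
  also have "\<dots> = (\<Sum>i<p. 1 + i * (p * w)) mod p\<^sup>2"
    by (simp only: one_plus_mult_power_mod_square mod_sum_eq mult.assoc)
  also have "(\<Sum>i<p. 1 + i * (p * w)) = p + (\<Sum>i<p. i) * (p * w)"
    by (simp only: sum.distrib sum_distrib_right[symmetric]) simp
  also have "\<dots> = p + p\<^sup>2 * (w * t)"
    by (simp add: gauss power2_eq_square algebra_simps)
  also have "(p + p\<^sup>2 * (w * t)) mod p\<^sup>2 = p"
    using p_ge_3 by (simp add: power2_eq_square)
  finally show ?thesis .
qed

lemma p_dvd_S_block: "p dvd geom_sum (s ^ k) p"
  using dvd_mod_imp_dvd[of p "geom_sum (s ^ k) p" "p\<^sup>2"] S_block_mod_square[of k] by simp

lemma prime_power_dvd_S: "p ^ j dvd k \<Longrightarrow> p ^ j dvd S k"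
proof -
  have "p ^ j dvd S (p ^ j)"
  proof (induction j)
    case (Suc j)
    have "S (p ^ Suc j) = S (p ^ j) * geom_sum (s ^ p ^ j) p"
      using geom_sum_mult[of s "p ^ j" p] by (simp only: power_Suc2)
    then show ?case
      using mult_dvd_mono[OF Suc.IH p_dvd_S_block] by (simp only: power_Suc2)
  qed (simp add: geom_sum_def)
  moreover assume "p ^ j dvd k"
  then obtain l where "k = p ^ j * l" ..
  ultimately show "p ^ j dvd S k"
    by (simp add: geom_sum_mult)
qed

lemma prime_power_dvd_S_imp: "p ^ j dvd S k \<Longrightarrow> p ^ j dvd k"
proof (induction j arbitrary: k)
  case (Suc j)
  then have "p dvd S k"
    using dvd_power[of "Suc j" p] dvd_trans by blast
  then have "p dvd k"
    using S_mod_p[of k] by (simp add: dvd_eq_mod_eq_0)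
  then obtain k' where k: "k = k' * p"
    by (metis dvd_def mult.commute)
  obtain u where u: "geom_sum (s ^ k') p = p * u"
    using p_dvd_S_block by blast
  have "\<not> p dvd u"
  proof
    assume "p dvd u"
    then have "p\<^sup>2 dvd geom_sum (s ^ k') p"
      using u by (simp add: power2_eq_square)
    then show False
      using S_block_mod_square[of k'] p_ge_3 by simp
  qed
  have "S k = S k' * geom_sum (s ^ k') p"
    using geom_sum_mult[of s k' p] k by simp
  also have "\<dots> = S k' * u * p"
    using u by (simp add: mult.commute mult.left_commute)
  finally have "p ^ j * p dvd S k' * u * p"
    using Suc.prems by (simp only: power_Suc2)
  then have "p ^ j dvd S k' * u"
    using p_ge_3 by simp
  moreover have "coprime (p ^ j) u"
    using \<open>\<not> p dvd u\<close> prime by (simp add: prime_imp_coprime)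
  ultimately have "p ^ j dvd k'"
    using Suc.IH coprime_dvd_mult_left_iff by blast
  then show ?case
    using k by simp
qed simp

lemma prime_power_dvd_S_iff: "p ^ j dvd S k \<longleftrightarrow> p ^ j dvd k"
  using prime_power_dvd_S prime_power_dvd_S_imp by blast

lemma S_mod_prime_power: "S (x mod p ^ j) mod p ^ j = S x mod p ^ j"
proof -
  have "p ^ j dvd S (p ^ j * (x div p ^ j))"
    by (rule prime_power_dvd_S) simp
  then obtain c where c: "S (p ^ j * (x div p ^ j)) = p ^ j * c"
    by (rule dvdE)
  have "S x = S (x mod p ^ j + p ^ j * (x div p ^ j))"
    by simp
  also have "\<dots> = S (x mod p ^ j) + (s ^ (x mod p ^ j) * c) * p ^ j"
    by (simp only: geom_sum_add c ac_simps)
  finally show ?thesis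
    by simp
qed

lemma coprime_p_minus_1: "coprime (p - 1) (p ^ j)"
proof -
  have "coprime (p - 1) (Suc (p - 1))"
    by simp
  then show ?thesis
    using p_ge_3 by simp
qed

lemma coprime_s_power: "coprime (s ^ k) (p ^ j)"
  using coprime_p_minus_1 by (simp add: s_def)

lemma coprime_p_minus_2: "coprime (p - 2) (p ^ j)"
proof -
  have "\<not> p dvd p - 2"
  proof
    assume "p dvd p - 2"
    then have "p \<le> p - 2"
      using p_ge_3 by (intro dvd_imp_le) auto
    then show False
      using p_ge_3 by simp
  qed
  then show ?thesis
    using prime by (simp add: prime_imp_coprime coprime_commute)
qed

lemma s_power_prime_power_mod:
  assumes "1 \<le> e"
  shows "s ^ p ^ (e - 1) mod p ^ e = 1"
proof -
  have "p ^ (e - 1) dvd S (p ^ (e - 1))"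
    by (rule prime_power_dvd_S) simp
  then obtain c where c: "S (p ^ (e - 1)) = p ^ (e - 1) * c"
    by (rule dvdE)
  have "p ^ e = p * p ^ (e - 1)"
    using assms by (simp flip: power_Suc)
  then have "s ^ p ^ (e - 1) = 1 + ((p - 2) * c) * p ^ e"
    using s_power[of "p ^ (e - 1)"] c by (simp add: algebra_simps)
  moreover have "1 < p ^ e"
    using p_ge_3 assms by (intro one_less_power) auto
  ultimately show ?thesis
    using mod_mult_self1[of 1 "(p - 2) * c" "p ^ e"] assms p_ge_3 by simp
qed

lemma S_mod_inj:
  assumes "x < p ^ e" "y < p ^ e" "S x mod p ^ e = S y mod p ^ e"
  shows "x = y"
proof -
  have le_case: "a = b" if ab: "a \<le> b" "b < p ^ e" "S a mod p ^ e = S b mod p ^ e" for a b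
  proof -
    have "(S a + s ^ a * S (b - a)) mod p ^ e = S a mod p ^ e"
      using ab geom_sum_add[of s a "b - a"] by simp
    then have "p ^ e dvd s ^ a * S (b - a)"
      by (rule add_mod_eq_imp_dvd)
    then have "p ^ e dvd b - a"
      using coprime_s_power[of a e] prime_power_dvd_S_iff
      by (simp add: coprime_commute coprime_dvd_mult_right_iff)
    moreover have "b - a < p ^ e"
      using ab by simp
    ultimately have "b - a = 0"
      by (cases "b - a = 0") (auto dest: dvd_imp_le)
    then show "a = b"
      using ab(1) by simp
  qed
  show ?thesis
  proof (cases "x \<le> y")
    case True
    then show ?thesis
      using le_case assms by blast
  next
    case False
    then show ?thesis
      using le_case[of y x] assms by simp
  qed
qed

lemma S_mod_surj: "\<exists>y<p ^ e. S y mod p ^ e = z mod p ^ e"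
proof -
  have "inj_on (\<lambda>y. S y mod p ^ e) {..<p ^ e}"
  proof (rule inj_onI)
    fix x y
    assume "x \<in> {..<p ^ e}" "y \<in> {..<p ^ e}" "S x mod p ^ e = S y mod p ^ e"
    then show "x = y"
      using S_mod_inj[of x e y] by simp
  qed
  moreover have "(\<lambda>y. S y mod p ^ e) ` {..<p ^ e} \<subseteq> {..<p ^ e}"
    using p_ge_3 by auto
  ultimately have "(\<lambda>y. S y mod p ^ e) ` {..<p ^ e} = {..<p ^ e}"
    by (intro endo_inj_surj) auto
  moreover have "z mod p ^ e \<in> {..<p ^ e}"
    using p_ge_3 by simp
  ultimately have "z mod p ^ e \<in> (\<lambda>y. S y mod p ^ e) ` {..<p ^ e}"
    by simp
  then show ?thesis
    by force
qed


lemma s_power_mod_inj: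
  assumes e: "e = Suc e'" and eq: "s ^ u mod p ^ e = s ^ v mod p ^ e"
  shows "u mod p ^ e' = v mod p ^ e'"
proof -
  have le_case: "x mod p ^ e' = y mod p ^ e'"
    if "x \<le> y" "s ^ x mod p ^ e = s ^ y mod p ^ e" for x y
  proof -
    define d where "d = y - x"
    have "(s ^ x * s ^ d) mod p ^ e = (s ^ x * 1) mod p ^ e"
      using that d_def by (simp flip: power_add)
    then have "s ^ d mod p ^ e = 1 mod p ^ e"
      by (rule mod_mult_cancel_coprime[OF coprime_s_power])
    then have "(1 + p * ((p - 2) * S d)) mod p ^ e = 1 mod p ^ e"
      by (simp add: s_power mult.assoc)
    then have "p * p ^ e' dvd p * ((p - 2) * S d)"
      unfolding e power_Suc by (rule add_mod_eq_imp_dvd)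
    then have "p ^ e' dvd (p - 2) * S d"
      using nat_mult_dvd_cancel1 p_ge_3 by simp
    moreover have "coprime (p ^ e') (p - 2)"
      using coprime_p_minus_2 coprime_commute by blast
    ultimately have "p ^ e' dvd S d"
      using coprime_dvd_mult_right_iff by blast
    then have "p ^ e' dvd y - x"
      using prime_power_dvd_S_iff d_def by blast
    then have "y mod p ^ e' = x mod p ^ e'"
      using mod_eq_dvd_iff_nat[OF that(1)] by blast
    then show ?thesis
      by simp
  qed
  show ?thesis
  proof (cases "u \<le> v")
    case True
    then show ?thesis
      using le_case eq by blast
  next
    case False
    then have "v mod p ^ e' = u mod p ^ e'"
      using le_case[of v u] eq by simp
    then show ?thesis
      by simp
  qed
qed

lemma extremal_skew_spec:
  assumes "x < p ^ e"
  shows "extremal_skew p e x < p ^ e \<and>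
    S (extremal_skew p e x) mod p ^ e = ((p - 1) * S x) mod p ^ e"
proof -
  obtain y where y: "y < p ^ e" "S y mod p ^ e = ((p - 1) * S x) mod p ^ e"
    using S_mod_surj by blast
  have "(THE y. y < p ^ e \<and> S y mod p ^ e = ((p - 1) * S x) mod p ^ e) = y"
  proof (rule the_equality)
    fix y'
    assume "y' < p ^ e \<and> S y' mod p ^ e = ((p - 1) * S x) mod p ^ e"
    then show "y' = y"
      using y S_mod_inj[of y' e y] by simp
  qed (use y in simp)
  then have "extremal_skew p e x = y"
    unfolding extremal_skew_def s_def[symmetric] using assms by simp
  then show ?thesis
    using y by simp
qed

lemma extremal_skew_less: "x < p ^ e \<Longrightarrow> extremal_skew p e x < p ^ e"
  using extremal_skew_spec by blast

lemma extremal_skew_S: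
  "x < p ^ e \<Longrightarrow> S (extremal_skew p e x) mod p ^ e = ((p - 1) * S x) mod p ^ e"
  using extremal_skew_spec by blast

lemma extremal_skew_not_less: "p ^ e \<le> x \<Longrightarrow> extremal_skew p e x = x"
  by (simp add: extremal_skew_def)

lemma extremal_skew_eqI:
  assumes "x < p ^ e" "y < p ^ e" "S y mod p ^ e = ((p - 1) * S x) mod p ^ e"
  shows "extremal_skew p e x = y"
  using extremal_skew_spec[OF assms(1)] assms S_mod_inj[of "extremal_skew p e x" e y] by simp

lemma funpow_extremal_skew_less: "z < p ^ e \<Longrightarrow> (extremal_skew p e ^^ k) z < p ^ e"
  by (induction k) (simp_all add: extremal_skew_less)

lemma funpow_extremal_skew_S:
  assumes "z < p ^ e"
  shows "S ((extremal_skew p e ^^ k) z) mod p ^ e = ((p - 1) ^ k * S z) mod p ^ e"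
proof (induction k)
  case (Suc k)
  have "S ((extremal_skew p e ^^ Suc k) z) mod p ^ e = ((p - 1) * S ((extremal_skew p e ^^ k) z)) mod p ^ e"
    using extremal_skew_S funpow_extremal_skew_less[OF assms] by simp
  also have "\<dots> = ((p - 1) * ((p - 1) ^ k * S z)) mod p ^ e"
    using Suc by (metis mod_mult_right_eq)
  finally show ?case
    by (simp add: mult.assoc)
qed simp

lemma extremal_skew_0: "extremal_skew p e 0 = 0"
  using extremal_skew_eqI[of 0 e 0] p_ge_3 by (simp add: geom_sum_def)

lemma extremal_skew_permutes: "extremal_skew p e permutes {0..<p ^ e}"
proof (rule bij_imp_permutes)
  have injective: "x = y"
    if "x < p ^ e" "y < p ^ e" "extremal_skew p e x = extremal_skew p e y" for x y
  proof -
    have "((p - 1) * S x) mod p ^ e = ((p - 1) * S y) mod p ^ e"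
      using extremal_skew_S that by metis
    then have "S x mod p ^ e = S y mod p ^ e"
      by (rule mod_mult_cancel_coprime[OF coprime_p_minus_1])
    then show "x = y"
      using S_mod_inj that by blast
  qed
  have inj: "inj_on (extremal_skew p e) {0..<p ^ e}"
  proof (rule inj_onI)
    fix x y
    assume "x \<in> {0..<p ^ e}" "y \<in> {0..<p ^ e}" "extremal_skew p e x = extremal_skew p e y"
    then show "x = y"
      using injective[of x y] by simp
  qed
  moreover have "extremal_skew p e ` {0..<p ^ e} \<subseteq> {0..<p ^ e}"
    using extremal_skew_less by auto
  ultimately show "bij_betw (extremal_skew p e) {0..<p ^ e} {0..<p ^ e}"
    by (simp add: bij_betw_def endo_inj_surj)
next
  fix x
  assume "x \<notin> {0..<p ^ e}"
  then show "extremal_skew p e x = x"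
    by (simp add: extremal_skew_not_less)
qed

text \<open>Since \<open>s = (p - 1)\<^sup>2\<close> and \<open>s ^ p ^ (e - 1) \<equiv> 1 (mod p ^ e)\<close>, the exponent
  \<open>2 * p ^ (e - 1) - 2\<close> acts on powers of \<open>p - 1\<close> like \<open>-2\<close>, so the left-hand side is
  \<open>(p - 1) ^ (1 + 2 * a) = (p - 1) * s ^ a\<close>.\<close>
lemma exponent_identity:
  assumes e: "1 \<le> e"
  shows "(s ^ y * (p - 1) ^ (1 + 2 * a + (2 * p ^ (e - 1) - 2) * y)) mod p ^ e
    = ((p - 1) * s ^ a) mod p ^ e"
proof -
  define K where "K = p ^ (e - 1)"
  have "0 < K"
    using p_ge_3 K_def by simp
  then obtain K' where "K = Suc K'"
    using gr0_implies_Suc by blast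
  then have exponent: "2 * y + (1 + 2 * a + (2 * K - 2) * y) = 1 + 2 * a + 2 * (K * y)"
    by (simp add: algebra_simps)
  have s_power_eq: "s ^ k = (p - 1) ^ (2 * k)" for k
    by (simp add: s_def power_mult)
  have "s ^ y * (p - 1) ^ (1 + 2 * a + (2 * K - 2) * y)
      = (p - 1) ^ (2 * y + (1 + 2 * a + (2 * K - 2) * y))"
    by (simp only: s_power_eq power_add)
  also have "\<dots> = (p - 1) * (p - 1) ^ (2 * a) * (p - 1) ^ (2 * (K * y))"
    by (simp only: exponent power_add power_one_right)
  also have "\<dots> = (p - 1) * s ^ a * (s ^ K) ^ y"
    by (simp only: s_power_eq power_mult)
  finally have "(s ^ y * (p - 1) ^ (1 + 2 * a + (2 * K - 2) * y)) mod p ^ e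
      = ((p - 1) * s ^ a * ((s ^ K) ^ y mod p ^ e)) mod p ^ e"
    by (simp only: mod_mult_right_eq)
  also have "(s ^ K) ^ y mod p ^ e = (s ^ K mod p ^ e) ^ y mod p ^ e"
    by (simp add: power_mod)
  also have "\<dots> = 1"
    using s_power_prime_power_mod[OF e] one_less_power[of p e] p_ge_3 e K_def by simp
  finally show ?thesis
    unfolding K_def by simp
qed


lemma extremal_skew_law:
  assumes e: "1 \<le> e" and a: "a < p ^ e" and b: "b < p ^ e"
  shows "extremal_skew p e ((a + b) mod p ^ e) =
    (extremal_skew p e a +
      (extremal_skew p e ^^ (1 + 2 * a + (2 * p ^ (e - 1) - 2) * extremal_skew p e a)) b) mod p ^ e"
proof -
  define N where "N = p ^ e"
  define F where "F = extremal_skew p e a"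
  define i where "i = 1 + 2 * a + (2 * p ^ (e - 1) - 2) * F"
  define B where "B = (extremal_skew p e ^^ i) b"
  have SF: "S F mod N = ((p - 1) * S a) mod N"
    using extremal_skew_S[OF a] F_def N_def by simp
  have SB: "S B mod N = ((p - 1) ^ i * S b) mod N"
    using funpow_extremal_skew_S[OF b] B_def N_def by simp
  have exponent: "(s ^ F * (p - 1) ^ i) mod N = ((p - 1) * s ^ a) mod N"
    using exponent_identity[OF e, of F a] i_def N_def by simp
  have "S ((F + B) mod N) mod N = (S F + s ^ F * S B) mod N"
    using S_mod_prime_power N_def by (simp add: geom_sum_add)
  also have "\<dots> = ((p - 1) * S a + s ^ F * ((p - 1) ^ i * S b)) mod N"
    by (rule mod_add_cong[OF SF mod_mult_cong[OF refl SB]])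
  also have "\<dots> = ((p - 1) * S a + (s ^ F * (p - 1) ^ i) * S b) mod N"
    by (simp only: mult.assoc)
  also have "\<dots> = ((p - 1) * S a + ((p - 1) * s ^ a) * S b) mod N"
    by (rule mod_add_cong[OF refl mod_mult_cong[OF exponent refl]])
  also have "(p - 1) * S a + ((p - 1) * s ^ a) * S b = (p - 1) * S (a + b)"
    by (simp add: geom_sum_add algebra_simps)
  also have "((p - 1) * S (a + b)) mod N = ((p - 1) * S ((a + b) mod N)) mod N"
    by (rule mod_mult_cong[OF refl]) (simp add: S_mod_prime_power N_def)
  finally have "extremal_skew p e ((a + b) mod N) = (F + B) mod N"
    using extremal_skew_eqI[of "(a + b) mod N" e "(F + B) mod N"] p_ge_3 N_def by simp
  then show ?thesis
    using N_def F_def i_def B_def by simp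
qed

lemma skew_morphism_extremal_skew:
  assumes "1 \<le> e"
  shows "skew_morphism (p ^ e) (extremal_skew p e)"
  unfolding skew_morphism_def
  using extremal_skew_permutes extremal_skew_0 extremal_skew_law[OF assms] by blast

lemma extremal_skew_Suc_mod:
  assumes "x < p ^ e"
  shows "extremal_skew p e x = extremal_skew p (Suc e) x mod p ^ e"
proof (rule extremal_skew_eqI[OF assms])
  have dvd: "p ^ e dvd p ^ Suc e"
    by simp
  have "p ^ e \<le> p ^ Suc e"
    using p_ge_3 by simp
  then have "x < p ^ Suc e"
    using assms by linarith
  show "extremal_skew p (Suc e) x mod p ^ e < p ^ e"
    using p_ge_3 by simp
  have "S (extremal_skew p (Suc e) x mod p ^ e) mod p ^ e = S (extremal_skew p (Suc e) x) mod p ^ Suc e mod p ^ e"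
    using S_mod_prime_power dvd by (simp add: mod_mod_cancel)
  also have "\<dots> = ((p - 1) * S x) mod p ^ Suc e mod p ^ e"
    using extremal_skew_S[OF \<open>x < p ^ Suc e\<close>] by simp
  finally show "S (extremal_skew p (Suc e) x mod p ^ e) mod p ^ e = ((p - 1) * S x) mod p ^ e"
    using dvd by (simp add: mod_mod_cancel)
qed

lemma extremal_skew_1:
  assumes "1 \<le> e"
  shows "extremal_skew p e 1 \<noteq> 1"
proof
  assume "extremal_skew p e 1 = 1"
  moreover have "p - 1 < p ^ e" "1 < p ^ e"
    using assms p_ge_3 self_le_power[of p e] by simp_all
  ultimately have "1 = (p - 1) mod p ^ e"
    using extremal_skew_S[of 1 e] assms p_ge_3 by (simp add: geom_sum_def)
  then show False
    using \<open>p - 1 < p ^ e\<close> p_ge_3 by simp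
qed

lemma extremal_skew_additive_imp_mod:
  assumes e: "e = Suc e'" and a: "a < p ^ e"
    and additive: "extremal_skew p e ((a + 1) mod p ^ e) = (extremal_skew p e a + extremal_skew p e 1) mod p ^ e"
  shows "extremal_skew p e a mod p ^ e' = a mod p ^ e'"
proof -
  define N where "N = p ^ e"
  define F where "F = extremal_skew p e a"
  define i where "i = 1 + 2 * a + (2 * p ^ (e - 1) - 2) * F"
  have one: "1 < N"
    unfolding N_def using p_ge_3 e by (intro one_less_power) auto
  have "(F + (extremal_skew p e ^^ i) 1) mod N = (F + extremal_skew p e 1) mod N"
    using extremal_skew_law[of e a 1] additive a one e N_def F_def i_def by simp
  then have "(extremal_skew p e ^^ i) 1 = extremal_skew p e 1"
    using add_mod_cancel_less funpow_extremal_skew_less[of 1 e i] extremal_skew_less[of 1 e] one N_def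
    by blast
  then have "((p - 1) ^ i * S 1) mod N = ((p - 1) ^ 1 * S 1) mod N"
    using funpow_extremal_skew_S[of 1 e i] funpow_extremal_skew_S[of 1 e 1] one N_def by simp
  then have "(p - 1) ^ i mod N = (p - 1) mod N"
    by (simp add: geom_sum_def)
  then have "(s ^ F * (p - 1) ^ i) mod N = (s ^ F * (p - 1)) mod N"
    by (metis mod_mult_right_eq)
  then have "((p - 1) * s ^ F) mod N = ((p - 1) * s ^ a) mod N"
    using exponent_identity[of e F a] e i_def N_def by (simp add: mult.commute)
  then have "s ^ F mod p ^ e = s ^ a mod p ^ e"
    using mod_mult_cancel_coprime[OF coprime_p_minus_1] N_def by blast
  then show ?thesis
    using s_power_mod_inj[OF e] F_def by blast
qed

lemma extremal_skew_mod_neq: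
  assumes e: "e = Suc e'" and a: "0 < a" "a < p ^ e'"
  shows "extremal_skew p e a mod p ^ e' \<noteq> a mod p ^ e'"
proof
  define K where "K = p ^ e'"
  define F where "F = extremal_skew p e a"
  assume "extremal_skew p e a mod p ^ e' = a mod p ^ e'"
  then have "S F mod K = S a mod K"
    by (metis S_mod_prime_power F_def K_def)
  moreover have "S F mod K = ((p - 1) * S a) mod K"
  proof -
    have "K dvd p ^ e"
      using e K_def by simp
    moreover have "p ^ e' \<le> p ^ e"
      using e p_ge_3 by simp
    then have "a < p ^ e"
      using a by linarith
    ultimately show ?thesis
      using extremal_skew_S[of a e] F_def mod_mod_cancel[of K "p ^ e"] by metis
  qed
  moreover have "p - 1 = (p - 2) + 1"
    using p_ge_3 by simp
  then have "(p - 1) * S a = S a + (p - 2) * S a"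
    by (simp add: algebra_simps)
  ultimately have "(S a + (p - 2) * S a) mod K = S a mod K"
    by simp
  then have "K dvd (p - 2) * S a"
    by (rule add_mod_eq_imp_dvd)
  moreover have "coprime K (p - 2)"
    using coprime_p_minus_2 coprime_commute K_def by blast
  ultimately have "K dvd S a"
    using coprime_dvd_mult_right_iff by blast
  then have "K dvd a"
    using prime_power_dvd_S_iff K_def by blast
  then show False
    using a K_def by (simp add: nat_dvd_not_less)
qed


text \<open>Otherwise \<open>skew_ord D\<close> divides \<open>p ^ (e' - 1)\<close>, so the skew morphism would be additive
  at \<open>p ^ (e' - 1)\<close>, which the two preceding lemmas exclude.\<close>
lemma skew_ord_derived_extremal_skew:
  assumes e: "e = Suc e'" "1 \<le> e'"
  shows "skew_ord (derived (p ^ e) (extremal_skew p e)) = p ^ e'"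
proof -
  have "p ^ e' < p ^ e"
    using e p_ge_3 by simp
  have "p \<le> p ^ e"
    using e p_ge_3 by (simp add: self_le_power)
  then have "2 \<le> p ^ e"
    using p_ge_3 by linarith
  interpret skew_morphism_Zn "p ^ e" "extremal_skew p e"
    using skew_morphism_extremal_skew[of e] e p_ge_3 by unfold_locales simp_all
  obtain i where i: "i \<le> e" "skew_ord D = p ^ i"
    using skew_ord_derived_dvd divides_primepow_nat[OF prime] by blast
  have "i \<noteq> e"
    using skew_ord_derived_less \<open>2 \<le> p ^ e\<close> i by auto
  moreover have "\<not> i < e'"
  proof
    assume "i < e'"
    define a where "a = p ^ (e' - 1)"
    have "a < p ^ e'"
      using a_def e p_ge_3 by simp
    have "skew_ord D dvd a"
      using i \<open>i < e'\<close> a_def by (simp add: le_imp_power_dvd)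
    then have "extremal_skew p e ((a + 1) mod p ^ e) = (extremal_skew p e a + extremal_skew p e 1) mod p ^ e"
      using \<open>a < p ^ e'\<close> \<open>p ^ e' < p ^ e\<close> \<open>2 \<le> p ^ e\<close>
      by (rule_tac skew_law_additive_if_skew_ord_derived_dvd) simp_all
    then have "extremal_skew p e a mod p ^ e' = a mod p ^ e'"
      using extremal_skew_additive_imp_mod[OF e(1)] \<open>a < p ^ e'\<close> \<open>p ^ e' < p ^ e\<close> by simp
    moreover have "0 < a"
      using a_def p_ge_3 by simp
    ultimately show False
      using extremal_skew_mod_neq[OF e(1)] \<open>a < p ^ e'\<close> by blast
  qed
  ultimately have "i = e'"
    using i(1) e(1) by linarith
  then show ?thesis
    using i(2) by simp
qed

lemma deriv_step_twice_extremal_skew: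
  assumes "1 \<le> e"
  shows "(deriv_step ^^ 2) (p ^ Suc e, extremal_skew p (Suc e)) = (p ^ e, extremal_skew p e)"
proof -
  interpret skew_morphism_Zn "p ^ Suc e" "extremal_skew p (Suc e)"
    using skew_morphism_extremal_skew[of "Suc e"] p_ge_3 by unfold_locales simp_all
  have ord: "skew_ord D = p ^ e"
    using skew_ord_derived_extremal_skew assms by simp
  have "derived m D x = extremal_skew p e x" for x
  proof (cases "x < p ^ e")
    case True
    then show ?thesis
      using second_derived_eq ord extremal_skew_Suc_mod by simp
  next
    case False
    then show ?thesis
      using ord by (simp add: derived_def extremal_skew_not_less)
  qed
  then show ?thesis
    using deriv_step_twice ord by auto
qed

lemma funpow_deriv_step_extremal_skew:
  "1 \<le> e \<Longrightarrow> (deriv_step ^^ (2 * (e - 1))) (p ^ e, extremal_skew p e) = (p, extremal_skew p 1)"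
proof (induction e rule: dec_induct)
  case (step e)
  have "2 * (Suc e - 1) = 2 * (e - 1) + 2"
    using step.hyps by simp
  then show ?case
    using step deriv_step_twice_extremal_skew by (simp only: funpow_add comp_apply)
qed simp

lemma complexity_extremal_skew:
  assumes e: "1 \<le> e"
  shows "complexity (p ^ e) (extremal_skew p e) = 2 * e - 1"
proof -
  define X where "X = (p ^ e, extremal_skew p e)"
  have "skew_pair X"
    using skew_morphism_extremal_skew[OF e] p_ge_3 X_def by (simp add: skew_pair_def)
  have "2 * e - 1 = Suc (2 * (e - 1))"
    using e by simp
  then have "(deriv_step ^^ (2 * e - 1)) X = deriv_step ((deriv_step ^^ (2 * (e - 1))) X)"
    by simp
  also have "\<dots> = deriv_step (p, extremal_skew p 1)"
    using funpow_deriv_step_extremal_skew e X_def by simp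
  finally have "fst ((deriv_step ^^ (2 * e - 1)) X) = skew_ord (extremal_skew p 1)"
    by (simp add: fst_deriv_step)
  moreover have "2 \<le> skew_ord (extremal_skew p 1)"
  proof (rule skew_ord_ge_2)
    show "permutation (extremal_skew p 1)"
      using extremal_skew_permutes[of 1] permutation_permutes by blast
    show "extremal_skew p 1 \<noteq> id"
      using extremal_skew_1[of 1] by auto
  qed
  moreover have "fst ((deriv_step ^^ Suc (2 * e - 1)) X) = 1"
    using funpow_deriv_step_prime_power[OF prime] skew_morphism_extremal_skew e X_def by simp
  ultimately show ?thesis
    using complexity_eqI[OF \<open>skew_pair X\<close>] X_def by simp
qed

end

theorem theorem6p2:
  fixes p e :: nat
  assumes "prime p" and "odd p" and "0 < e"
  shows "(\<forall>\<phi>. skew_morphism (p ^ e) \<phi> \<longrightarrow> complexity (p ^ e) \<phi> \<le> 2 * e - 1) \<and>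
         (\<exists>\<phi>. skew_morphism (p ^ e) \<phi> \<and> complexity (p ^ e) \<phi> = 2 * e - 1)"
proof -
  interpret odd_prime p
    using assms(1,2) by unfold_locales
  have "complexity (p ^ e) \<phi> \<le> 2 * e - 1" if "skew_morphism (p ^ e) \<phi>" for \<phi>
    using complexity_prime_power_less[OF assms(1,3) that] by linarith
  moreover have "skew_morphism (p ^ e) (extremal_skew p e)"
    using skew_morphism_extremal_skew assms(3) by simp
  moreover have "complexity (p ^ e) (extremal_skew p e) = 2 * e - 1"
    using complexity_extremal_skew assms(3) by simp
  ultimately show ?thesis
    by blast
qed

end
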